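(* Suppose $F_0$ has a unique fixed point $\bar x$ in $V$, and that for some $m\ge0$ the map $F_m$ is monotone (nondecreasing or nonincreasing) in each of its arguments. Let $F_m^*$, the monotonicity types, $\le_\tau$, $P_\tau$, $P_\tau^t$ be as in the context, and assume: $F_m^*$ has a unique fixed point; $F_m^*$ has no pseudo-fixed points; and for every initial condition $X_0\in V^{k+m}$ there exist $x,y\in V$ with $$x\le y,\quad x<F_m^*(P_\tau(x,y)),\quad F_m^*(P_\tau^t(x,y))<y,\quad P_\tau(x,y)\le_\tau X_0\le_\tau P_\tau^t(x,y).$$ Then $\bar x$ is a global attractor of $x_{n+1}=F_0(x_n,\dots,x_{n-k+1})$: every solution with initial values in $V$ converges to $\bar x$.
   Context: Let $k\ge 2$, $V\subseteq\mathbb{R}$ be $\mathbb{R}$ or $[0,\infty)$, and $F_0:V^k\to V$ continuous. Define $F_m:V^k\to V$ recursively by $F_{m+1}(u_1,\dots,u_k)=F_m(F_0(u_1,\dots,u_k),u_1,\dots,u_{k-1})$; the $F_m$-equation is $z_{n+1}=F_m(z_{n-m},\dots,z_{n-m-k+1})$. Define $F_m^*:V^{k+m}\to V$ by $F_m^*(u_1,\dots,u_{k+m})=F_m(u_{m+1},\dots,u_{m+k})$, so the $F_m$-equation reads $z_{n+1}=F_m^*(z_n,\dots,z_{n-m-k+1})$, with initial condition $X_0=(z_0,z_{-1},\dots,z_{-m-k+1})\in V^{k+m}$. To each coordinate $i\in\{1,\dots,k+m\}$ assign a type "increasing" or "decreasing" such that $F_m^*$ is nondecreasing (resp. nonincreasing)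 in its $i$-th argument when the type is increasing (resp. decreasing); for the first $m$ coordinates, on which $F_m^*$ is constant, any type may be assigned. The partial order $\le_\tau$ on $V^{k+m}$: $(x_1,\dots,x_{k+m})\le_\tau(y_1,\dots,y_{k+m})$ iff $x_i\le y_i$ for coordinates of increasing type and $x_i\ge y_i$ for coordinates of decreasing type. For $x,y\in V$, $P_\tau(x,y)=(u_1,\dots,u_{k+m})$ with $u_i=x$ for increasing-type coordinates and $u_i=y$ for decreasing-type coordinates, and $P_\tau^t(x,y)$ is obtained by interchanging $x$ and $y$. A pseudo-fixed point of $F_m^*$ is a pair $(x,y)\in V^2$ with $x\ne y$, $x=F_m^*(P_\tau(x,y))$ and $y=F_m^*(P^t_\tau(x,y))$. A fixed point of $F_m^*$ is $x$ with $F_m^*(x,\dots,x)=x$. *)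

theory Defs
  imports "HOL-Analysis.Analysis"
begin

text \<open>Points of V^n are represented as functions nat => real that are
  0-indexed (u 0 = u_1, ..., u (n-1) = u_n) and extensional (value 0 at
  indices >= n).\<close>

definition dom :: "nat \<Rightarrow> real set \<Rightarrow> (nat \<Rightarrow> real) set" where
  "dom n V = {u. (\<forall>i<n. u i \<in> V) \<and> (\<forall>i\<ge>n. u i = 0)}"

definition cst :: "nat \<Rightarrow> real \<Rightarrow> (nat \<Rightarrow> real)" where
  "cst n x = (\<lambda>i. if i < n then x else 0)"

fun Fm :: "nat \<Rightarrow> ((nat \<Rightarrow> real) \<Rightarrow> real) \<Rightarrow> nat \<Rightarrow> (nat \<Rightarrow> real) \<Rightarrow> real" where
  "Fm k F0 0 u = F0 u"
| "Fm k F0 (Suc m) u =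
     Fm k F0 m (\<lambda>i. if i = 0 then F0 u else if i < k then u (i - 1) else 0)"

definition Fstar :: "nat \<Rightarrow> ((nat \<Rightarrow> real) \<Rightarrow> real) \<Rightarrow> nat \<Rightarrow> (nat \<Rightarrow> real) \<Rightarrow> real" where
  "Fstar k F0 m u = Fm k F0 m (\<lambda>i. if i < k then u (m + i) else 0)"

text \<open>tau i = True: coordinate i (0-indexed) has increasing type.\<close>
definition le_tau :: "(nat \<Rightarrow> bool) \<Rightarrow> nat \<Rightarrow> (nat \<Rightarrow> real) \<Rightarrow> (nat \<Rightarrow> real) \<Rightarrow> bool" where
  "le_tau tau n x y = (\<forall>i<n. (tau i \<longrightarrow> x i \<le> y i) \<and> (\<not> tau i \<longrightarrow> x i \<ge> y i))"

definition P_tau :: "(nat \<Rightarrow> bool) \<Rightarrow> nat \<Rightarrow> real \<Rightarrow> real \<Rightarrow> (nat \<Rightarrow> real)" where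
  "P_tau tau n x y = (\<lambda>i. if i < n then (if tau i then x else y) else 0)"

definition Pt_tau :: "(nat \<Rightarrow> bool) \<Rightarrow> nat \<Rightarrow> real \<Rightarrow> real \<Rightarrow> (nat \<Rightarrow> real)" where
  "Pt_tau tau n x y = P_tau tau n y x"

definition nondecr_arg :: "nat \<Rightarrow> real set \<Rightarrow> ((nat \<Rightarrow> real) \<Rightarrow> real) \<Rightarrow> nat \<Rightarrow> bool" where
  "nondecr_arg n V G i = (\<forall>u\<in>dom n V. \<forall>a\<in>V. \<forall>b\<in>V. a \<le> b \<longrightarrow> G (u(i := a)) \<le> G (u(i := b)))"

definition nonincr_arg :: "nat \<Rightarrow> real set \<Rightarrow> ((nat \<Rightarrow> real) \<Rightarrow> real) \<Rightarrow> nat \<Rightarrow> bool" where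
  "nonincr_arg n V G i = (\<forall>u\<in>dom n V. \<forall>a\<in>V. \<forall>b\<in>V. a \<le> b \<longrightarrow> G (u(i := a)) \<ge> G (u(i := b)))"

definition pseudo_fixed_point ::
  "real set \<Rightarrow> ((nat \<Rightarrow> real) \<Rightarrow> real) \<Rightarrow> (nat \<Rightarrow> bool) \<Rightarrow> nat \<Rightarrow> real \<Rightarrow> real \<Rightarrow> bool" where
  "pseudo_fixed_point V G tau n x y =
     (x \<in> V \<and> y \<in> V \<and> x \<noteq> y \<and> x = G (P_tau tau n x y) \<and> y = G (Pt_tau tau n x y))"

text \<open>z (0..k-1) = x_{-k+1}, ..., x_0;  z (n+k) = F0(z(n+k-1), ..., z n).\<close>
definition is_solution :: "nat \<Rightarrow> real set \<Rightarrow> ((nat \<Rightarrow> real) \<Rightarrow> real) \<Rightarrow> (nat \<Rightarrow> real) \<Rightarrow> bool" where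
  "is_solution k V F0 z = ((\<forall>i<k. z i \<in> V) \<and>
     (\<forall>n. z (n + k) = F0 (\<lambda>i. if i < k then z (n + k - 1 - i) else 0)))"

end

theory Submission
  imports Defs
begin

text \<open>
  Write \<open>F\<close> for \<open>F\<^sub>m\<^sup>*\<close> and iterate \<open>(a, b) \<mapsto> (F (P(a, b)), F (P\<^sup>t(a, b)))\<close> from the given
  bounds \<open>(x, y)\<close>. Mixed monotonicity makes \<open>a\<^sub>j\<close> nondecreasing, \<open>b\<^sub>j\<close> nonincreasing and \<open>a\<^sub>j \<le> b\<^sub>j\<close>;
  it also shows that if \<open>k + m\<close> consecutive terms of a solution lie in \<open>[a\<^sub>j, b\<^sub>j]\<close>, the next
  term lies in \<open>[a\<^sub>j\<^sub>+\<^sub>1, b\<^sub>j\<^sub>+\<^sub>1]\<close>. By continuity the limits satisfy \<open>L = F (P(L, U))\<close> and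
  \<open>U = F (P\<^sup>t(L, U))\<close>, so the absence of pseudo-fixed points forces \<open>L = U\<close>, the fixed point of
  \<open>F\<close>, which is \<open>xbar\<close>. Every solution of the \<open>F\<^sub>0\<close>-equation solves the \<open>F\<^sub>m\<close>-equation, so it is
  squeezed between \<open>a\<^sub>j\<close> and \<open>b\<^sub>j\<close> and tends to \<open>xbar\<close>.
\<close>

lemma tendsto_P_tau:
  assumes "(f \<longlongrightarrow> p) F" "(g \<longlongrightarrow> q) F"
  shows "((\<lambda>j. P_tau tau n (f j) (g j)) \<longlongrightarrow> P_tau tau n p q) F"
proof -
  have "continuous_on UNIV (\<lambda>x. if i < n then if tau i then fst x else snd x else (0::real))" for i
    by (cases "i < n"; cases "tau i") (simp_all add: continuous_on_fst continuous_on_snd)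
  then have "continuous_on UNIV (\<lambda>(p, q). P_tau tau n p q)"
    unfolding P_tau_def case_prod_beta by (rule continuous_on_coordinatewise_then_product)
  from continuous_on_tendsto_compose[OF this tendsto_Pair[OF assms]] show ?thesis by simp
qed

lemma P_tau_in_dom: "p \<in> V \<Longrightarrow> q \<in> V \<Longrightarrow> P_tau tau n p q \<in> dom n V"
  by (simp add: P_tau_def dom_def)

lemma Pt_tau_in_dom: "p \<in> V \<Longrightarrow> q \<in> V \<Longrightarrow> Pt_tau tau n p q \<in> dom n V"
  by (simp add: Pt_tau_def P_tau_in_dom)

lemma P_tau_diag: "P_tau tau n c c = cst n c"
  by (auto simp: P_tau_def cst_def)

lemma le_tau_P_tau_Pt_tau: "p \<le> q \<Longrightarrow> le_tau tau n (P_tau tau n p q) (Pt_tau tau n p q)"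
  by (simp add: le_tau_def P_tau_def Pt_tau_def)

lemma le_tau_P_tau_mono: "p \<le> p' \<Longrightarrow> q' \<le> q \<Longrightarrow> le_tau tau n (P_tau tau n p q) (P_tau tau n p' q')"
  by (simp add: le_tau_def P_tau_def)

lemma le_tau_Pt_tau_antimono:
  "p \<le> p' \<Longrightarrow> q' \<le> q \<Longrightarrow> le_tau tau n (Pt_tau tau n p' q') (Pt_tau tau n p q)"
  by (simp add: le_tau_def P_tau_def Pt_tau_def)

lemma le_tau_between_P_tau_Pt_tau_iff:
  "le_tau tau n (P_tau tau n p q) u \<and> le_tau tau n u (Pt_tau tau n p q) \<longleftrightarrow>
   (\<forall>i<n. p \<le> u i \<and> u i \<le> q)"
  by (auto simp: le_tau_def P_tau_def Pt_tau_def)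

lemma le_tau_monotone_if_typed_args:
  assumes typed: "\<forall>i<n. (tau i \<longrightarrow> nondecr_arg n V G i) \<and> (\<not> tau i \<longrightarrow> nonincr_arg n V G i)"
    and u: "u \<in> dom n V" and v: "v \<in> dom n V" and le: "le_tau tau n u v"
  shows "G u \<le> G v"
proof -
  define w where "w j = (\<lambda>i. if i < j then v i else u i)" for j
  have w_dom: "w j \<in> dom n V" for j
    using u v by (auto simp: w_def dom_def)
  have step: "G (w j) \<le> G (w (Suc j))" if "j < n" for j
  proof -
    have w_upd: "w (Suc j) = (w j)(j := v j)" "w j = (w j)(j := u j)"
      by (auto simp: w_def)
    have "u j \<in> V" "v j \<in> V"
      using u v \<open>j < n\<close> by (auto simp: dom_def)
    with typed le \<open>j < n\<close> w_dom show ?thesis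
      unfolding le_tau_def nondecr_arg_def nonincr_arg_def
      by (cases "tau j") (metis w_upd)+
  qed
  have "G (w 0) \<le> G (w j)" if "j \<le> n" for j
    using that by (induction j) (auto intro: order_trans[OF _ step])
  moreover have "w 0 = u" "w n = v"
    using u v by (auto simp: w_def dom_def)
  ultimately show ?thesis by fastforce
qed

definition window :: "nat \<Rightarrow> (nat \<Rightarrow> real) \<Rightarrow> nat \<Rightarrow> (nat \<Rightarrow> real)" where
  "window n z N = (\<lambda>i. if i < n then z (N + n - 1 - i) else 0)"

lemma window_nth: "i < n \<Longrightarrow> window n z N i = z (N + (n - 1 - i))"
  by (simp add: window_def)

lemma window_between_iff:
  "(\<forall>i<n. p \<le> window n z N i \<and> window n z N i \<le> q) \<longleftrightarrow> (\<forall>i<n. p \<le> z (N + i) \<and> z (N + i) \<le> q)"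
proof
  assume between: "\<forall>i<n. p \<le> window n z N i \<and> window n z N i \<le> q"
  show "\<forall>i<n. p \<le> z (N + i) \<and> z (N + i) \<le> q"
  proof (intro allI impI)
    fix i assume "i < n"
    then have "n - 1 - i < n" and "window n z N (n - 1 - i) = z (N + i)"
      by (simp_all add: window_nth)
    with between show "p \<le> z (N + i) \<and> z (N + i) \<le> q" by metis
  qed
next
  assume between: "\<forall>i<n. p \<le> z (N + i) \<and> z (N + i) \<le> q"
  show "\<forall>i<n. p \<le> window n z N i \<and> window n z N i \<le> q"
  proof (intro allI impI)
    fix i assume "i < n"
    then have "n - 1 - i < n" and "window n z N i = z (N + (n - 1 - i))"
      by (simp_all add: window_nth)
    with between show "p \<le> window n z N i \<and> window n z N i \<le> q" by metis
  qed
qed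

locale mixed_monotone =
  fixes n :: nat and V :: "real set" and tau :: "nat \<Rightarrow> bool" and G :: "(nat \<Rightarrow> real) \<Rightarrow> real"
  assumes closed_V: "closed V"
    and G_in_V: "u \<in> dom n V \<Longrightarrow> G u \<in> V"
    and continuous_G: "continuous_on (dom n V) G"
    and monotone_G: "u \<in> dom n V \<Longrightarrow> v \<in> dom n V \<Longrightarrow> le_tau tau n u v \<Longrightarrow> G u \<le> G v"
begin

definition enclosing :: "real \<Rightarrow> real \<Rightarrow> bool" where
  "enclosing p q \<longleftrightarrow>
     p \<in> V \<and> q \<in> V \<and> p \<le> q \<and> p \<le> G (P_tau tau n p q) \<and> G (Pt_tau tau n p q) \<le> q"

definition step :: "real \<times> real \<Rightarrow> real \<times> real" where
  "step = (\<lambda>(p, q). (G (P_tau tau n p q), G (Pt_tau tau n p q)))"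

definition lower :: "real \<Rightarrow> real \<Rightarrow> nat \<Rightarrow> real" where
  "lower p q j = fst ((step ^^ j) (p, q))"

definition upper :: "real \<Rightarrow> real \<Rightarrow> nat \<Rightarrow> real" where
  "upper p q j = snd ((step ^^ j) (p, q))"

lemma lower_0 [simp]: "lower p q 0 = p" and upper_0 [simp]: "upper p q 0 = q"
  by (simp_all add: lower_def upper_def)

lemma lower_Suc: "lower p q (Suc j) = G (P_tau tau n (lower p q j) (upper p q j))"
  and upper_Suc: "upper p q (Suc j) = G (Pt_tau tau n (lower p q j) (upper p q j))"
  by (simp_all add: lower_def upper_def step_def case_prod_beta)

lemma G_between:
  assumes "p \<in> V" "q \<in> V" "w \<in> dom n V" "\<forall>i<n. p \<le> w i \<and> w i \<le> q"
  shows "G (P_tau tau n p q) \<le> G w \<and> G w \<le> G (Pt_tau tau n p q)"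
  using assms le_tau_between_P_tau_Pt_tau_iff[of tau n p q w]
  by (auto intro!: monotone_G P_tau_in_dom Pt_tau_in_dom)

lemma enclosing_step:
  assumes "enclosing p q"
  shows "enclosing (G (P_tau tau n p q)) (G (Pt_tau tau n p q))"
proof -
  define p' q' where "p' = G (P_tau tau n p q)" and "q' = G (Pt_tau tau n p q)"
  have "p \<in> V" "q \<in> V" and le: "p \<le> q" "p \<le> p'" "q' \<le> q"
    using assms by (simp_all add: enclosing_def p'_def q'_def)
  then have V: "p \<in> V" "q \<in> V" "p' \<in> V" "q' \<in> V"
    by (simp_all add: p'_def q'_def G_in_V P_tau_in_dom Pt_tau_in_dom)
  have "p' \<le> q'"
    unfolding p'_def q'_def using V le by (intro monotone_G P_tau_in_dom Pt_tau_in_dom le_tau_P_tau_Pt_tau)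
  moreover have "G (P_tau tau n p q) \<le> G (P_tau tau n p' q')"
    using V le by (intro monotone_G P_tau_in_dom le_tau_P_tau_mono)
  moreover have "G (Pt_tau tau n p' q') \<le> G (Pt_tau tau n p q)"
    using V le by (intro monotone_G Pt_tau_in_dom le_tau_Pt_tau_antimono)
  ultimately show ?thesis
    using V by (simp add: enclosing_def p'_def q'_def)
qed

lemma enclosing_lower_upper: "enclosing p q \<Longrightarrow> enclosing (lower p q j) (upper p q j)"
  by (induction j) (simp_all add: lower_Suc upper_Suc enclosing_step)

lemma incseq_lower: "enclosing p q \<Longrightarrow> incseq (lower p q)"
  using enclosing_lower_upper by (auto intro!: incseq_SucI simp: enclosing_def lower_Suc)

lemma decseq_upper: "enclosing p q \<Longrightarrow> decseq (upper p q)"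
  using enclosing_lower_upper by (auto intro!: decseq_SucI simp: enclosing_def upper_Suc)

lemma lower_le_upper:
  assumes "enclosing p q"
  shows "lower p q i \<le> upper p q j"
proof -
  have "lower p q i \<le> lower p q (max i j)" "upper p q (max i j) \<le> upper p q j"
    using incseq_lower[OF assms] decseq_upper[OF assms] by (auto simp: incseq_def decseq_def)
  moreover have "lower p q (max i j) \<le> upper p q (max i j)"
    using enclosing_lower_upper[OF assms] by (simp add: enclosing_def)
  ultimately show ?thesis by linarith
qed

lemma lower_upper_limits:
  assumes "enclosing p q"
  obtains L U where "L \<in> V" "U \<in> V" "lower p q \<longlonglongrightarrow> L" "upper p q \<longlonglongrightarrow> U"
    "L = G (P_tau tau n L U)" "U = G (Pt_tau tau n L U)"
proof -
  obtain L where L: "lower p q \<longlonglongrightarrow> L"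
    using incseq_convergent[OF incseq_lower[OF assms]] lower_le_upper[OF assms, of _ 0] by blast
  obtain U where U: "upper p q \<longlonglongrightarrow> U"
    using decseq_convergent[OF decseq_upper[OF assms]] lower_le_upper[OF assms, of 0] by blast
  have in_V: "lower p q j \<in> V" "upper p q j \<in> V" for j
    using enclosing_lower_upper[OF assms] by (auto simp: enclosing_def)
  have "L \<in> V" "U \<in> V"
    using closed_sequentially[OF closed_V _ L] closed_sequentially[OF closed_V _ U] in_V by simp_all
  have "(\<lambda>j. G (P_tau tau n (lower p q j) (upper p q j))) \<longlonglongrightarrow> G (P_tau tau n L U)"
    by (rule continuous_on_tendsto_compose[OF continuous_G tendsto_P_tau[OF L U]])
      (simp_all add: P_tau_in_dom in_V \<open>L \<in> V\<close> \<open>U \<in> V\<close>)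
  from LIMSEQ_unique[OF LIMSEQ_Suc[OF L] this[folded lower_Suc]] have "L = G (P_tau tau n L U)" .
  moreover have "(\<lambda>j. G (Pt_tau tau n (lower p q j) (upper p q j))) \<longlonglongrightarrow> G (Pt_tau tau n L U)"
    unfolding Pt_tau_def
    by (rule continuous_on_tendsto_compose[OF continuous_G tendsto_P_tau[OF U L]])
      (simp_all add: P_tau_in_dom in_V \<open>L \<in> V\<close> \<open>U \<in> V\<close>)
  from LIMSEQ_unique[OF LIMSEQ_Suc[OF U] this[folded upper_Suc]] have "U = G (Pt_tau tau n L U)" .
  ultimately show ?thesis
    using that \<open>L \<in> V\<close> \<open>U \<in> V\<close> L U by blast
qed

lemma lower_upper_tendsto_fixed_point:
  assumes no_pseudo: "\<not> (\<exists>x y. pseudo_fixed_point V G tau n x y)" and "enclosing p q"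
  obtains c where "c \<in> V" "G (cst n c) = c" "lower p q \<longlonglongrightarrow> c" "upper p q \<longlonglongrightarrow> c"
proof -
  obtain L U where "L \<in> V" "U \<in> V" "lower p q \<longlonglongrightarrow> L" "upper p q \<longlonglongrightarrow> U"
    and fixed: "L = G (P_tau tau n L U)" "U = G (Pt_tau tau n L U)"
    using lower_upper_limits[OF \<open>enclosing p q\<close>] .
  moreover have "L = U"
    using no_pseudo fixed \<open>L \<in> V\<close> \<open>U \<in> V\<close> by (auto simp: pseudo_fixed_point_def)
  ultimately show ?thesis
    using that[of L] by (simp add: P_tau_diag)
qed

definition solution :: "(nat \<Rightarrow> real) \<Rightarrow> bool" where
  "solution z \<longleftrightarrow> (\<forall>N. z N \<in> V) \<and> (\<forall>N. z (N + n) = G (window n z N))"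

lemma solution_next_between:
  assumes "solution z" "p \<in> V" "q \<in> V" "\<forall>i<n. p \<le> z (M + i) \<and> z (M + i) \<le> q"
  shows "G (P_tau tau n p q) \<le> z (M + n) \<and> z (M + n) \<le> G (Pt_tau tau n p q)"
proof -
  have "window n z M \<in> dom n V"
    using assms(1) by (simp add: solution_def window_def dom_def)
  moreover have "\<forall>i<n. p \<le> window n z M i \<and> window n z M i \<le> q"
    using assms(4) window_between_iff by blast
  moreover have "z (M + n) = G (window n z M)"
    using assms(1) by (simp add: solution_def)
  ultimately show ?thesis
    using G_between[OF assms(2,3)] by simp
qed

lemma solution_enclosed:
  assumes "solution z" "enclosing p q" "\<forall>i<n. p \<le> z i \<and> z i \<le> q"
  shows "p \<le> z N \<and> z N \<le> q"
proof (induction N rule: less_induct)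
  case (less N)
  show ?case
  proof (cases "N < n")
    case True
    then show ?thesis using assms(3) by blast
  next
    case False
    then have M: "N = (N - n) + n"
      by simp
    have "\<forall>i<n. p \<le> z (N - n + i) \<and> z (N - n + i) \<le> q"
      using less False by auto
    moreover have "p \<in> V" "q \<in> V" "p \<le> G (P_tau tau n p q)" "G (Pt_tau tau n p q) \<le> q"
      using assms(2) by (simp_all add: enclosing_def)
    ultimately show ?thesis
      using solution_next_between[OF assms(1)] M by fastforce
  qed
qed

lemma solution_between_lower_upper:
  assumes "solution z" "enclosing p q" "\<forall>i<n. p \<le> z i \<and> z i \<le> q"
  shows "j * n \<le> N \<Longrightarrow> lower p q j \<le> z N \<and> z N \<le> upper p q j"
proof (induction j arbitrary: N)
  case 0
  then show ?case using solution_enclosed[OF assms] by simp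
next
  case (Suc j)
  define M where "M = N - n"
  have M: "N = M + n" "j * n \<le> M"
    using Suc.prems by (simp_all add: M_def)
  have "\<forall>i<n. lower p q j \<le> z (M + i) \<and> z (M + i) \<le> upper p q j"
    using Suc.IH M(2) by simp
  moreover have "lower p q j \<in> V" "upper p q j \<in> V"
    using enclosing_lower_upper[OF assms(2), of j] by (simp_all add: enclosing_def)
  ultimately show ?case
    using solution_next_between[OF assms(1)] M(1) by (simp add: lower_Suc upper_Suc)
qed

theorem solution_tendsto_fixed_point:
  assumes no_pseudo: "\<not> (\<exists>x y. pseudo_fixed_point V G tau n x y)"
    and unique: "\<forall>x\<in>V. G (cst n x) = x \<longrightarrow> x = c"
    and z: "solution z" and pq: "enclosing p q" "\<forall>i<n. p \<le> z i \<and> z i \<le> q"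
  shows "z \<longlonglongrightarrow> c"
proof -
  obtain c' where "c' \<in> V" "G (cst n c') = c'" and lim: "lower p q \<longlonglongrightarrow> c'" "upper p q \<longlonglongrightarrow> c'"
    using lower_upper_tendsto_fixed_point[OF no_pseudo pq(1)] .
  with unique have lim: "lower p q \<longlonglongrightarrow> c" "upper p q \<longlonglongrightarrow> c"
    by auto
  have trapped: "eventually (\<lambda>N. lower p q j \<le> z N \<and> z N \<le> upper p q j) sequentially" for j
    using solution_between_lower_upper[OF z pq] by (auto simp: eventually_sequentially)
  show ?thesis
  proof (rule order_tendstoI)
    fix a assume "a < c"
    then obtain j where "a < lower p q j"
      using order_tendstoD(1)[OF lim(1) \<open>a < c\<close>] by (auto simp: eventually_sequentially)
    then show "eventually (\<lambda>N. a < z N) sequentially"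
      using trapped[of j] by (auto elim: eventually_mono)
  next
    fix b assume "c < b"
    then obtain j where "upper p q j < b"
      using order_tendstoD(2)[OF lim(2) \<open>c < b\<close>] by (auto simp: eventually_sequentially)
    then show "eventually (\<lambda>N. z N < b) sequentially"
      using trapped[of j] by (auto elim: eventually_mono)
  qed
qed

end

definition next_state :: "nat \<Rightarrow> ((nat \<Rightarrow> real) \<Rightarrow> real) \<Rightarrow> (nat \<Rightarrow> real) \<Rightarrow> (nat \<Rightarrow> real)" where
  "next_state k F0 u = (\<lambda>i. if i = 0 then F0 u else if i < k then u (i - 1) else 0)"

lemma Fm_Suc_next_state: "Fm k F0 (Suc m) u = Fm k F0 m (next_state k F0 u)"
  by (simp add: next_state_def)

declare Fm.simps(2) [simp del]

lemma next_state_in_dom: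
  "1 \<le> k \<Longrightarrow> (\<forall>u\<in>dom k V. F0 u \<in> V) \<Longrightarrow> u \<in> dom k V \<Longrightarrow> next_state k F0 u \<in> dom k V"
  by (auto simp: next_state_def dom_def)

lemma continuous_on_next_state:
  assumes "continuous_on (dom k V) F0"
  shows "continuous_on (dom k V) (next_state k F0)"
  unfolding next_state_def
proof (rule continuous_on_coordinatewise_then_product)
  fix i
  show "continuous_on (dom k V) (\<lambda>u. if i = 0 then F0 u else if i < k then u (i - 1) else 0)"
    using assms continuous_on_subset[OF continuous_on_product_coordinates subset_UNIV]
    by (cases "i = 0"; cases "i < k") simp_all
qed

lemma Fm_in_V:
  "1 \<le> k \<Longrightarrow> (\<forall>u\<in>dom k V. F0 u \<in> V) \<Longrightarrow> u \<in> dom k V \<Longrightarrow> Fm k F0 m u \<in> V"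
  by (induction m arbitrary: u) (simp_all add: Fm_Suc_next_state next_state_in_dom)

lemma continuous_on_Fm:
  assumes "1 \<le> k" "\<forall>u\<in>dom k V. F0 u \<in> V" "continuous_on (dom k V) F0"
  shows "continuous_on (dom k V) (Fm k F0 m)"
proof (induction m)
  case 0
  then show ?case using assms(3) by (simp add: Fm.simps(1)[abs_def])
next
  case (Suc m)
  have "next_state k F0 ` dom k V \<subseteq> dom k V"
    using next_state_in_dom[OF assms(1,2)] by blast
  from continuous_on_compose2[OF Suc continuous_on_next_state[OF assms(3)] this]
  have "continuous_on (dom k V) (\<lambda>u. Fm k F0 m (next_state k F0 u))" .
  then show ?case by (simp add: Fm_Suc_next_state[abs_def])
qed

lemma Fm_cst: "1 \<le> k \<Longrightarrow> F0 (cst k x) = x \<Longrightarrow> Fm k F0 m (cst k x) = x"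
proof (induction m)
  case (Suc m)
  moreover have "next_state k F0 (cst k x) = cst k x"
    using Suc.prems by (auto simp: next_state_def cst_def fun_eq_iff)
  ultimately show ?case by (simp add: Fm_Suc_next_state)
qed simp

lemma is_solution_window: "is_solution k V F0 z \<Longrightarrow> z (N + k) = F0 (window k z N)"
  by (simp add: is_solution_def window_def)

lemma is_solution_in_V:
  assumes "is_solution k V F0 z" "\<forall>u\<in>dom k V. F0 u \<in> V"
  shows "z N \<in> V"
proof (induction N rule: less_induct)
  case (less N)
  show ?case
  proof (cases "N < k")
    case True
    then show ?thesis using assms(1) by (simp add: is_solution_def)
  next
    case False
    then have "z N = F0 (window k z (N - k))"
      using is_solution_window[OF assms(1), of "N - k"] by simp
    moreover have "window k z (N - k) \<in> dom k V"
      using less False by (auto simp: window_def dom_def)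
    ultimately show ?thesis
      using assms(2) by simp
  qed
qed

lemma next_state_window:
  assumes "is_solution k V F0 z" "1 \<le> k"
  shows "next_state k F0 (window k z N) = window k z (Suc N)"
  using assms(2) is_solution_window[OF assms(1), of N]
  by (auto simp: next_state_def window_def fun_eq_iff)

lemma Fm_window:
  assumes "is_solution k V F0 z" "1 \<le> k"
  shows "Fm k F0 m (window k z N) = z (N + k + m)"
proof (induction m arbitrary: N)
  case 0
  then show ?case using is_solution_window[OF assms(1)] by simp
next
  case (Suc m)
  then show ?case by (simp add: Fm_Suc_next_state next_state_window[OF assms])
qed

lemma Fstar_window: "Fstar k F0 m (window (k + m) z N) = Fm k F0 m (window k z N)"
proof -
  have "(\<lambda>i. if i < k then window (k + m) z N (m + i) else 0) = window k z N"
    by (auto simp: window_def fun_eq_iff)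
  then show ?thesis by (simp add: Fstar_def)
qed

lemma Fstar_in_V:
  "1 \<le> k \<Longrightarrow> (\<forall>u\<in>dom k V. F0 u \<in> V) \<Longrightarrow> u \<in> dom (k + m) V \<Longrightarrow> Fstar k F0 m u \<in> V"
  unfolding Fstar_def by (rule Fm_in_V) (auto simp: dom_def)

lemma continuous_on_Fstar:
  assumes "1 \<le> k" "\<forall>u\<in>dom k V. F0 u \<in> V" "continuous_on (dom k V) F0"
  shows "continuous_on (dom (k + m) V) (Fstar k F0 m)"
proof -
  have restrict: "continuous_on (dom (k + m) V) (\<lambda>u. \<lambda>i. if i < k then u (m + i) else 0)"
  proof (rule continuous_on_coordinatewise_then_product)
    fix i
    show "continuous_on (dom (k + m) V) (\<lambda>u. if i < k then u (m + i) else 0)"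
      using continuous_on_subset[OF continuous_on_product_coordinates subset_UNIV]
      by (cases "i < k") simp_all
  qed
  have "(\<lambda>u. \<lambda>i. if i < k then u (m + i) else 0) ` dom (k + m) V \<subseteq> dom k V"
    by (auto simp: dom_def)
  from continuous_on_compose2[OF continuous_on_Fm[OF assms] restrict this] show ?thesis
    by (simp add: Fstar_def[abs_def])
qed

lemma Fstar_cst:
  assumes "1 \<le> k" "F0 (cst k x) = x"
  shows "Fstar k F0 m (cst (k + m) x) = x"
proof -
  have "(\<lambda>i. if i < k then cst (k + m) x (m + i) else 0) = cst k x"
    by (auto simp: cst_def)
  then show ?thesis
    by (simp add: Fstar_def Fm_cst[of k F0 x m, OF assms])
qed

lemma Fstar_typed_args:
  assumes "\<forall>i. m \<le> i \<and> i < k + m \<longrightarrow>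
    (tau i \<longrightarrow> nondecr_arg (k + m) V (Fstar k F0 m) i) \<and>
    (\<not> tau i \<longrightarrow> nonincr_arg (k + m) V (Fstar k F0 m) i)"
  shows "\<forall>i<k + m. (tau i \<longrightarrow> nondecr_arg (k + m) V (Fstar k F0 m) i) \<and>
    (\<not> tau i \<longrightarrow> nonincr_arg (k + m) V (Fstar k F0 m) i)"
proof -
  have "Fstar k F0 m (u(i := a)) = Fstar k F0 m u" if "i < m" for u i a
  proof -
    have "(\<lambda>j. if j < k then (u(i := a)) (m + j) else 0) = (\<lambda>j. if j < k then u (m + j) else 0)"
      using that by auto
    then show ?thesis by (simp add: Fstar_def)
  qed
  then have "nondecr_arg (k + m) V (Fstar k F0 m) i \<and> nonincr_arg (k + m) V (Fstar k F0 m) i"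
    if "i < m" for i
    using that by (simp add: nondecr_arg_def nonincr_arg_def)
  with assms show ?thesis
    by (meson not_le)
qed

theorem mainTheorem9:
  fixes k m :: nat and V :: "real set" and F0 :: "(nat \<Rightarrow> real) \<Rightarrow> real"
    and xbar :: real and tau :: "nat \<Rightarrow> bool"
  assumes k2: "k \<ge> 2"
    and V: "V = UNIV \<or> V = {0..}"
    and F0_maps: "\<forall>u\<in>dom k V. F0 u \<in> V"
    and F0_cont: "continuous_on (dom k V) F0"
    and xbar: "xbar \<in> V" "F0 (cst k xbar) = xbar"
    and xbar_unique: "\<forall>x\<in>V. F0 (cst k x) = x \<longrightarrow> x = xbar"
    and types: "\<forall>i. m \<le> i \<and> i < k + m \<longrightarrow>
         (tau i \<longrightarrow> nondecr_arg (k + m) V (Fstar k F0 m) i) \<and>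
         (\<not> tau i \<longrightarrow> nonincr_arg (k + m) V (Fstar k F0 m) i)"
    and fix_unique: "\<exists>!x. x \<in> V \<and> Fstar k F0 m (cst (k + m) x) = x"
    and no_pseudo: "\<not> (\<exists>x y. pseudo_fixed_point V (Fstar k F0 m) tau (k + m) x y)"
    and bounds: "\<forall>X0\<in>dom (k + m) V. \<exists>x\<in>V. \<exists>y\<in>V. x \<le> y \<and>
         x < Fstar k F0 m (P_tau tau (k + m) x y) \<and>
         Fstar k F0 m (Pt_tau tau (k + m) x y) < y \<and>
         le_tau tau (k + m) (P_tau tau (k + m) x y) X0 \<and>
         le_tau tau (k + m) X0 (Pt_tau tau (k + m) x y)"
  shows "\<forall>z. is_solution k V F0 z \<longrightarrow> z \<longlonglongrightarrow> xbar"
proof (intro allI impI)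
  fix z assume z: "is_solution k V F0 z"
  have k: "1 \<le> k" using k2 by simp
  interpret mixed_monotone "k + m" V tau "Fstar k F0 m"
    using V Fstar_in_V[OF k F0_maps] continuous_on_Fstar[OF k F0_maps F0_cont]
      le_tau_monotone_if_typed_args[OF Fstar_typed_args[OF types]]
    by unfold_locales auto
  have sol: "solution z"
    using is_solution_in_V[OF z F0_maps] Fstar_window Fm_window[OF z k]
    by (simp add: solution_def add.assoc)
  have "window (k + m) z 0 \<in> dom (k + m) V"
    using is_solution_in_V[OF z F0_maps] by (simp add: window_def dom_def)
  then obtain x y where "x \<in> V" "y \<in> V" "x \<le> y"
    "x < Fstar k F0 m (P_tau tau (k + m) x y)" "Fstar k F0 m (Pt_tau tau (k + m) x y) < y"
    and initial: "le_tau tau (k + m) (P_tau tau (k + m) x y) (window (k + m) z 0)"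
      "le_tau tau (k + m) (window (k + m) z 0) (Pt_tau tau (k + m) x y)"
    using bounds by blast
  then have "enclosing x y"
    by (simp add: enclosing_def)
  moreover have "\<forall>i<k + m. x \<le> z i \<and> z i \<le> y"
    using le_tau_between_P_tau_Pt_tau_iff[THEN iffD1, OF conjI[OF initial]]
      window_between_iff[of "k + m" x z 0 y] by simp
  moreover have "\<forall>c\<in>V. Fstar k F0 m (cst (k + m) c) = c \<longrightarrow> c = xbar"
    using fix_unique xbar Fstar_cst[of k F0 xbar m, OF k xbar(2)] by blast
  ultimately show "z \<longlonglongrightarrow> xbar"
    using solution_tendsto_fixed_point[OF no_pseudo _ sol] by blast
qed

end
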